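(* Let $G=(L\cup R,E)$ be a Tanner graph without parallel edges and with no node of degree less than 2. Let $\mathcal{S}\in\mathcal{T}$ be an elementary trapping set of size $a$. Then for every elementary trapping set $\mathcal{S}'\in\mathcal{T}$ with $|\mathcal{S}'|=a+1$ and $\mathcal{S}\subset\mathcal{S}'$, the unique variable node $u\in\mathcal{S}'\setminus\mathcal{S}$ has all of its neighbors in $\Gamma(\mathcal{S})$ lying in $\Gamma_{\mathrm{o}}(\mathcal{S})$, i.e., $u$ is adjacent to no node of $\Gamma_{\mathrm{e}}(\mathcal{S})$.
   Context: A Tanner graph is a bipartite graph $G=(L\cup R,E)$ with variable nodes $L$ and check nodes $R$. For $\mathcal{S}\subset L$, $\Gamma(\mathcal{S})$ is the set of neighbors of $\mathcal{S}$ in $R$, and the induced subgraph $G(\mathcal{S})$ has node set $\mathcal{S}\cup\Gamma(\mathcal{S})$ and all edges of $G$ between $\mathcal{S}$ and $\Gamma(\mathcal{S})$. $\Gamma_{\mathrm{o}}(\mathcal{S})$ and $\Gamma_{\mathrm{e}}(\mathcal{S})$ are the check nodes of $\Gamma(\mathcal{S})$ with odd, respectively even, degree in $G(\mathcal{S})$ (unsatisfied, respectively satisfied, check nodes). $\mathcal{S}$ is an $(a,b)$ trapping set if $|\mathcal{S}|=a$ (its size) and $|\Gamma_{\mathrm{o}}(\mathcal{S})|=b$; it is elementary if every check node of $G(\mathcal{S})$ has degree one or two in $G(\mathcal{S})$. $\mathcal{T}$ denotes the set of all trapping sets $\mathcal{S}\subset L$ such that $G(\mathcal{S})$ is connected and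 every node of $\mathcal{S}$ is adjacent to at least two nodes of $\Gamma_{\mathrm{e}}(\mathcal{S})$. *)

theory Defs
  imports Main
begin

text \<open>Representing E as a
  set of pairs means there are no parallel edges.\<close>

definition tanner_graph :: "'v set \<Rightarrow> 'c set \<Rightarrow> ('v \<times> 'c) set \<Rightarrow> bool" where
  "tanner_graph L R E \<longleftrightarrow> finite L \<and> finite R \<and> E \<subseteq> L \<times> R"

definition var_degree :: "('v \<times> 'c) set \<Rightarrow> 'v \<Rightarrow> nat" where
  "var_degree E v = card {c. (v, c) \<in> E}"

definition check_degree :: "('v \<times> 'c) set \<Rightarrow> 'c \<Rightarrow> nat" where
  "check_degree E c = card {v. (v, c) \<in> E}"

definition min_degree_two :: "'v set \<Rightarrow> 'c set \<Rightarrow> ('v \<times> 'c) set \<Rightarrow> bool" where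
  "min_degree_two L R E \<longleftrightarrow>
     (\<forall>v\<in>L. var_degree E v \<ge> 2) \<and> (\<forall>c\<in>R. check_degree E c \<ge> 2)"

definition nbr :: "('v \<times> 'c) set \<Rightarrow> 'v set \<Rightarrow> 'c set" where
  "nbr E S = {c. \<exists>v\<in>S. (v, c) \<in> E}"

definition deg_in :: "('v \<times> 'c) set \<Rightarrow> 'v set \<Rightarrow> 'c \<Rightarrow> nat" where
  "deg_in E S c = card {v\<in>S. (v, c) \<in> E}"

definition nbr_odd :: "('v \<times> 'c) set \<Rightarrow> 'v set \<Rightarrow> 'c set" where
  "nbr_odd E S = {c\<in>nbr E S. odd (deg_in E S c)}"

definition nbr_even :: "('v \<times> 'c) set \<Rightarrow> 'v set \<Rightarrow> 'c set" where
  "nbr_even E S = {c\<in>nbr E S. even (deg_in E S c)}"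

definition elementary :: "('v \<times> 'c) set \<Rightarrow> 'v set \<Rightarrow> bool" where
  "elementary E S \<longleftrightarrow> (\<forall>c\<in>nbr E S. deg_in E S c = 1 \<or> deg_in E S c = 2)"

definition induced_adj :: "('v \<times> 'c) set \<Rightarrow> 'v set \<Rightarrow> (('v + 'c) \<times> ('v + 'c)) set" where
  "induced_adj E S =
     {(Inl v, Inr c) | v c. v \<in> S \<and> (v, c) \<in> E} \<union>
     {(Inr c, Inl v) | v c. v \<in> S \<and> (v, c) \<in> E}"

definition induced_nodes :: "('v \<times> 'c) set \<Rightarrow> 'v set \<Rightarrow> ('v + 'c) set" where
  "induced_nodes E S = Inl ` S \<union> Inr ` nbr E S"

definition induced_connected :: "('v \<times> 'c) set \<Rightarrow> 'v set \<Rightarrow> bool" where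
  "induced_connected E S \<longleftrightarrow>
     (\<forall>x\<in>induced_nodes E S. \<forall>y\<in>induced_nodes E S. (x, y) \<in> (induced_adj E S)\<^sup>*)"

definition in_class_T :: "'v set \<Rightarrow> ('v \<times> 'c) set \<Rightarrow> 'v set \<Rightarrow> bool" where
  "in_class_T L E S \<longleftrightarrow>
     S \<subseteq> L \<and> S \<noteq> {} \<and> induced_connected E S \<and>
     (\<forall>v\<in>S. card {c\<in>nbr_even E S. (v, c) \<in> E} \<ge> 2)"

end

theory Submission
  imports Defs
begin

text \<open>In an elementary trapping set a satisfied check node has exactly two neighbours
  in the set. A new variable node adjacent to it would raise its degree to three in the
  enlarged set, which then could not be elementary.\<close>

lemma nbr_mono: "S \<subseteq> S' \<Longrightarrow> nbr E S \<subseteq> nbr E S'"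
  by (auto simp: nbr_def)

lemma nbr_odd_iff: "c \<in> nbr_odd E S \<longleftrightarrow> c \<in> nbr E S \<and> odd (deg_in E S c)"
  by (simp add: nbr_odd_def)

lemma elementary_deg_in_le_2:
  "elementary E S \<Longrightarrow> c \<in> nbr E S \<Longrightarrow> deg_in E S c \<le> 2"
  by (auto simp: elementary_def)

lemma elementary_even_deg_in:
  assumes "elementary E S" and "c \<in> nbr E S" and "even (deg_in E S c)"
  shows "deg_in E S c = 2"
  using assms by (auto simp: elementary_def)

lemma deg_in_insert_less:
  assumes "finite S'" and "S \<subseteq> S'" and "u \<in> S' - S" and "(u, c) \<in> E"
  shows "deg_in E S c < deg_in E S' c"
proof -
  have sub: "insert u {v\<in>S. (v, c) \<in> E} \<subseteq> {v\<in>S'. (v, c) \<in> E}"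
    using assms(2-4) by auto
  have fin: "finite {v\<in>S'. (v, c) \<in> E}"
    using assms(1) by simp
  have "deg_in E S c < card (insert u {v\<in>S. (v, c) \<in> E})"
    using assms(3) finite_subset[OF sub fin] by (simp add: deg_in_def)
  also have "\<dots> \<le> deg_in E S' c"
    unfolding deg_in_def using card_mono[OF fin sub] .
  finally show ?thesis .
qed

lemma elementary_extension_adj_nbr_odd:
  assumes "elementary E S" and "elementary E S'" and "finite S'" and "S \<subseteq> S'"
    and "u \<in> S' - S" and "(u, c) \<in> E" and "c \<in> nbr E S"
  shows "c \<in> nbr_odd E S"
proof (rule ccontr)
  assume "c \<notin> nbr_odd E S"
  with assms(7) have "deg_in E S c = 2"
    using elementary_even_deg_in[OF assms(1)] by (simp add: nbr_odd_iff)
  moreover have "deg_in E S c < deg_in E S' c"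
    using deg_in_insert_less[OF assms(3-6)] .
  moreover have "deg_in E S' c \<le> 2"
    using elementary_deg_in_le_2[OF assms(2)] nbr_mono[OF assms(4)] assms(7) by (meson subsetD)
  ultimately show False by simp
qed

theorem lemma2:
  fixes L :: "'v set" and R :: "'c set" and E :: "('v \<times> 'c) set"
    and S :: "'v set" and a :: nat
  assumes "tanner_graph L R E"
    and "min_degree_two L R E"
    and "in_class_T L E S" and "elementary E S" and "card S = a"
  shows "\<forall>S'. in_class_T L E S' \<and> elementary E S' \<and> card S' = a + 1 \<and> S \<subset> S' \<longrightarrow>
           (\<forall>u\<in>S' - S. \<forall>c\<in>nbr E S. (u, c) \<in> E \<longrightarrow> c \<in> nbr_odd E S)"
proof (intro allI impI ballI)
  fix S' u c
  assume S': "in_class_T L E S' \<and> elementary E S' \<and> card S' = a + 1 \<and> S \<subset> S'"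
    and "u \<in> S' - S" and "c \<in> nbr E S" and "(u, c) \<in> E"
  have "S' \<subseteq> L" and "finite L"
    using S' assms(1) by (simp_all add: in_class_T_def tanner_graph_def)
  then have "finite S'"
    by (rule finite_subset)
  then show "c \<in> nbr_odd E S"
    using elementary_extension_adj_nbr_odd[OF assms(4)] S' \<open>u \<in> S' - S\<close> \<open>(u, c) \<in> E\<close> \<open>c \<in> nbr E S\<close>
    by blast
qed

end
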